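(* There is no simple complex abelian surface $A$ with $\mathfrak{d}_A=3$.
   Context: If $A$ is a complex abelian surface with period matrix $(\tau\ \ I_2)$, $\tau=(\tau_{ij})\in M_2(\mathbb{C})$, $\det\operatorname{Im}\tau\ne0$ (i.e. $A=\mathbb{C}^2/\Lambda$ with $\Lambda$ generated by the columns), then $\mathfrak{d}_A=[\mathbb{Q}(\{\tau_{ij}\}):\mathbb{Q}]$; this does not depend on the choice of such period matrix. *)

theory Defs
  imports "HOL-Analysis.Analysis"
begin

text \<open>A period matrix (tau I_2): tau is a 2x2 complex matrix with det Im tau nonzero.
  The lattice is generated over Z by the two columns of tau and the two standard basis vectors.\<close>

definition period_lattice :: "complex^2^2 \<Rightarrow> (complex^2) set" where
  "period_lattice \<tau> =
     {(\<chi> i. (\<Sum>j\<in>UNIV. of_int (a j) * \<tau>$i$j) + of_int (b i)) | a b :: 2 \<Rightarrow> int. True}"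

text \<open>Riemann form: a real bilinear alternating form E on C^2, integral on the lattice,
  with E(ix,iy) = E(x,y) and E(ix,x) > 0 for x nonzero (i.e. H(x,y) = E(ix,y) + i E(x,y) is a
  positive definite Hermitian form).  The torus is an abelian surface iff such a form exists.\<close>

definition is_riemann_form :: "complex^2^2 \<Rightarrow> (complex^2 \<Rightarrow> complex^2 \<Rightarrow> real) \<Rightarrow> bool" where
  "is_riemann_form \<tau> E \<longleftrightarrow>
     bilinear E \<and>
     (\<forall>x y. E x y = - E y x) \<and>
     (\<forall>x\<in>period_lattice \<tau>. \<forall>y\<in>period_lattice \<tau>. E x y \<in> \<int>) \<and>
     (\<forall>x y. E (\<i> *s x) (\<i> *s y) = E x y) \<and>
     (\<forall>x. x \<noteq> 0 \<longrightarrow> E (\<i> *s x) x > 0)"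

definition is_abelian_surface :: "complex^2^2 \<Rightarrow> bool" where
  "is_abelian_surface \<tau> \<longleftrightarrow>
     det (\<chi> i j. Im (\<tau>$i$j)) \<noteq> 0 \<and> (\<exists>E. is_riemann_form \<tau> E)"

text \<open>Simple: no complex subtorus of dimension 1, i.e. there is no complex line
  C w (w nonzero) containing two R-linearly independent lattice vectors.\<close>

definition is_simple_surface :: "complex^2^2 \<Rightarrow> bool" where
  "is_simple_surface \<tau> \<longleftrightarrow>
     \<not> (\<exists>w u v. w \<noteq> 0 \<and> u \<in> period_lattice \<tau> \<and> v \<in> period_lattice \<tau> \<and>
           (\<exists>c. u = c *s w) \<and> (\<exists>d. v = d *s w) \<and>
           (\<forall>r s :: real. r *\<^sub>R u + s *\<^sub>R v = 0 \<longrightarrow> r = 0 \<and> s = 0))"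

definition is_subfield_C :: "complex set \<Rightarrow> bool" where
  "is_subfield_C F \<longleftrightarrow> 0 \<in> F \<and> 1 \<in> F \<and>
     (\<forall>x\<in>F. \<forall>y\<in>F. x + y \<in> F \<and> x * y \<in> F) \<and>
     (\<forall>x\<in>F. - x \<in> F \<and> inverse x \<in> F)"

definition gen_field :: "complex set \<Rightarrow> complex set" where
  "gen_field S = \<Inter> {F. is_subfield_C F \<and> S \<subseteq> F}"

definition Q_degree_eq :: "complex set \<Rightarrow> nat \<Rightarrow> bool" where
  "Q_degree_eq F n \<longleftrightarrow> (\<exists>b :: nat \<Rightarrow> complex.
     (\<forall>q :: nat \<Rightarrow> rat. (\<Sum>i<n. of_rat (q i) * b i) = 0 \<longrightarrow> (\<forall>i<n. q i = 0)) \<and>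
     F = {\<Sum>i<n. of_rat (q i) * b i | q :: nat \<Rightarrow> rat. True})"

end

theory Submission
  imports Defs
begin

text \<open>Suppose \<open>K = \<rat>(\<tau>\<^sub>i\<^sub>j)\<close> is cubic. A plane spanned by rational vectors \<open>x, y \<in> \<rat>\<^sup>4\<close>
  (coordinates with respect to the lattice basis) gives a one-dimensional complex subtorus iff
  their images under the period map \<open>\<Pi>\<close> are \<open>\<complex>\<close>-dependent, i.e. iff the Pluecker vector
  \<open>v = x \<and> y\<close> satisfies \<open>W \<cdot> v = 0\<close>, where \<open>det (\<Pi> x, \<Pi> y) = W \<cdot> (x \<and> y)\<close> and \<open>W \<in> K\<^sup>6\<close>.
  Writing \<open>W = W\<^sub>0 + W\<^sub>1 t + W\<^sub>2 t\<^sup>2\<close> in a power basis of \<open>K\<close>, this becomes the rational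
  linear system \<open>W\<^sub>0 \<cdot> v = W\<^sub>1 \<cdot> v = W\<^sub>2 \<cdot> v = 0\<close> for a point \<open>v\<close> of the Pluecker quadric.
  The system has a solution over \<open>K\<close>: planes through a \<open>K\<close>-rational vector of \<open>ker \<Pi>\<close> satisfy
  \<open>W \<cdot> v = 0\<close> automatically, and two further linear conditions leave a nonzero one. As \<open>K/\<rat>\<close> has
  odd degree, Springer's theorem yields a rational isotropic solution, and rational isotropic
  vectors are decomposable.\<close>

section \<open>Subfields of \<open>\<complex>\<close> and homogeneous linear systems\<close>

lemma subfield_C_0: "is_subfield_C F \<Longrightarrow> 0 \<in> F"
  and subfield_C_1: "is_subfield_C F \<Longrightarrow> 1 \<in> F"
  and subfield_C_add: "is_subfield_C F \<Longrightarrow> x \<in> F \<Longrightarrow> y \<in> F \<Longrightarrow> x + y \<in> F"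
  and subfield_C_mult: "is_subfield_C F \<Longrightarrow> x \<in> F \<Longrightarrow> y \<in> F \<Longrightarrow> x * y \<in> F"
  and subfield_C_uminus: "is_subfield_C F \<Longrightarrow> x \<in> F \<Longrightarrow> - x \<in> F"
  and subfield_C_inverse: "is_subfield_C F \<Longrightarrow> x \<in> F \<Longrightarrow> inverse x \<in> F"
  by (simp_all add: is_subfield_C_def)

lemma subfield_C_diff: "is_subfield_C F \<Longrightarrow> x \<in> F \<Longrightarrow> y \<in> F \<Longrightarrow> x - y \<in> F"
  by (metis diff_conv_add_uminus subfield_C_add subfield_C_uminus)

lemma subfield_C_divide: "is_subfield_C F \<Longrightarrow> x \<in> F \<Longrightarrow> y \<in> F \<Longrightarrow> x / y \<in> F"
  by (metis divide_inverse subfield_C_inverse subfield_C_mult)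

lemma subfield_C_power: "is_subfield_C F \<Longrightarrow> x \<in> F \<Longrightarrow> x ^ n \<in> F"
  by (induction n) (auto intro: subfield_C_1 subfield_C_mult)

lemma subfield_C_sum: "is_subfield_C F \<Longrightarrow> (\<And>j. j \<in> J \<Longrightarrow> f j \<in> F) \<Longrightarrow> sum f J \<in> F"
  by (induction J rule: infinite_finite_induct) (auto intro: subfield_C_0 subfield_C_add)

lemma subfield_C_of_nat: "is_subfield_C F \<Longrightarrow> of_nat n \<in> F"
  by (induction n) (auto intro: subfield_C_0 subfield_C_1 subfield_C_add)

lemma subfield_C_of_int: "is_subfield_C F \<Longrightarrow> of_int z \<in> F"
  by (cases z rule: int_cases) (auto intro: subfield_C_of_nat subfield_C_uminus simp del: of_nat_Suc)

lemma subfield_C_Rats: "is_subfield_C F \<Longrightarrow> x \<in> \<rat> \<Longrightarrow> x \<in> F"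
  by (auto elim!: Rats_cases' intro!: subfield_C_divide subfield_C_of_int)

lemma Rats_subfield_C: "is_subfield_C \<rat>"
  unfolding is_subfield_C_def by auto

lemma subfield_C_gen_field: "is_subfield_C (gen_field S)"
  unfolding gen_field_def is_subfield_C_def by auto

lemma subset_gen_field: "S \<subseteq> gen_field S"
  unfolding gen_field_def by auto

lemma homogeneous_system_solution_extend:
  fixes A :: "'r \<Rightarrow> 'c \<Rightarrow> complex"
  assumes J: "finite J" "j0 \<in> J" and pivot: "A r0 j0 \<noteq> 0"
    and y: "\<forall>r\<in>I. (\<Sum>j\<in>J - {j0}. (A r0 j0 * A r j - A r j0 * A r0 j) * y j) = 0"
  defines "y' \<equiv> y(j0 := - (\<Sum>j\<in>J - {j0}. A r0 j * y j) / A r0 j0)"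
  shows "\<forall>r\<in>insert r0 I. (\<Sum>j\<in>J. A r j * y' j) = 0"
proof -
  have split: "(\<Sum>j\<in>J. A r j * y' j) = A r j0 * y' j0 + (\<Sum>j\<in>J - {j0}. A r j * y j)" for r
    using J by (simp add: sum.remove y'_def)
  have row0: "(\<Sum>j\<in>J. A r0 j * y' j) = 0"
    unfolding split using pivot by (simp add: y'_def)
  have "A r0 j0 * (\<Sum>j\<in>J. A r j * y' j) = 0" if "r \<in> I" for r
  proof -
    have "A r0 j0 * (\<Sum>j\<in>J. A r j * y' j)
        = (\<Sum>j\<in>J - {j0}. (A r0 j0 * A r j - A r j0 * A r0 j) * y j)
          + A r j0 * (A r0 j0 * y' j0 + (\<Sum>j\<in>J - {j0}. A r0 j * y j))"
      unfolding split by (simp add: sum_distrib_left sum_subtractf algebra_simps)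
    also have "\<dots> = 0" using y that row0 unfolding split by simp
    finally show ?thesis .
  qed
  then show ?thesis using row0 pivot by auto
qed

lemma homogeneous_system_solution:
  assumes F: "is_subfield_C F" and "finite I" "finite J" "card I < card J"
    and "\<forall>r\<in>I. \<forall>j\<in>J. A r j \<in> F"
  shows "\<exists>y. (\<forall>j\<in>J. y j \<in> F) \<and> (\<exists>j\<in>J. y j \<noteq> 0) \<and> (\<forall>r\<in>I. (\<Sum>j\<in>J. A r j * y j) = 0)"
  using assms(2-5)
proof (induction I arbitrary: J A rule: finite_induct)
  case empty
  then obtain j0 where "j0 \<in> J" by fastforce
  then show ?case
    by (intro exI[of _ "\<lambda>j. if j = j0 then 1 else 0"]) (auto intro: subfield_C_0[OF F] subfield_C_1[OF F])
next
  case (insert r0 I)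
  show ?case
  proof (cases "\<forall>j\<in>J. A r0 j = 0")
    case True
    with insert show ?thesis by fastforce
  next
    case False
    then obtain j0 where j0: "j0 \<in> J" "A r0 j0 \<noteq> 0" by auto
    have "card I < card (J - {j0})" using insert j0 by auto
    moreover have "\<forall>r\<in>I. \<forall>j\<in>J - {j0}. A r0 j0 * A r j - A r j0 * A r0 j \<in> F"
      using insert.prems(3) j0 by (auto intro!: subfield_C_diff[OF F] subfield_C_mult[OF F])
    ultimately obtain y where y: "\<forall>j\<in>J - {j0}. y j \<in> F" "\<exists>j\<in>J - {j0}. y j \<noteq> 0"
        "\<forall>r\<in>I. (\<Sum>j\<in>J - {j0}. (A r0 j0 * A r j - A r j0 * A r0 j) * y j) = 0"
      using insert.IH[of "J - {j0}" "\<lambda>r j. A r0 j0 * A r j - A r j0 * A r0 j"] insert.prems(1) by auto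
    define y' where "y' = y(j0 := - (\<Sum>j\<in>J - {j0}. A r0 j * y j) / A r0 j0)"
    have "(\<Sum>j\<in>J - {j0}. A r0 j * y j) \<in> F"
      using y(1) insert.prems(3) by (auto intro!: subfield_C_sum[OF F] subfield_C_mult[OF F])
    then have "\<forall>j\<in>J. y' j \<in> F"
      using y(1) j0 insert.prems(3) by (auto simp: y'_def intro!: subfield_C_divide[OF F] subfield_C_uminus[OF F])
    moreover have "\<exists>j\<in>J. y' j \<noteq> 0" using y(2) by (auto simp: y'_def)
    moreover have "\<forall>r\<in>insert r0 I. (\<Sum>j\<in>J. A r j * y' j) = 0"
      unfolding y'_def by (rule homogeneous_system_solution_extend[OF insert.prems(1) j0 y(3)])
    ultimately show ?thesis by blast
  qed
qed

section \<open>Rational spans\<close>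

definition rat_independent :: "nat \<Rightarrow> (nat \<Rightarrow> complex) \<Rightarrow> bool" where
  "rat_independent n w \<longleftrightarrow>
     (\<forall>c. (\<forall>i<n. c i \<in> \<rat>) \<longrightarrow> (\<Sum>i<n. c i * w i) = 0 \<longrightarrow> (\<forall>i<n. c i = 0))"

definition rat_span :: "nat \<Rightarrow> (nat \<Rightarrow> complex) \<Rightarrow> complex set" where
  "rat_span n w = {\<Sum>i<n. c i * w i | c. \<forall>i<n. c i \<in> \<rat>}"

lemma Rats_fun_cases:
  assumes "\<forall>i<n. c i \<in> \<rat>"
  obtains q where "\<forall>i<n. c i = of_rat (q i)"
proof
  show "\<forall>i<n. c i = of_rat (SOME r. c i = of_rat r)"
    using assms by (metis (mono_tags, lifting) Rats_cases someI_ex)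
qed

lemma Q_degree_eq_rat_basis:
  assumes "Q_degree_eq K n"
  obtains b where "rat_independent n b" "K = rat_span n b"
proof -
  obtain b where indep: "\<forall>q :: nat \<Rightarrow> rat. (\<Sum>i<n. of_rat (q i) * b i) = 0 \<longrightarrow> (\<forall>i<n. q i = 0)"
    and K: "K = {\<Sum>i<n. of_rat (q i) * b i | q :: nat \<Rightarrow> rat. True}"
    using assms unfolding Q_degree_eq_def by blast
  have coeffs: "(\<Sum>i<n. c i * b i) = (\<Sum>i<n. of_rat (q i) * b i)" if "\<forall>i<n. c i = of_rat (q i)" for c q
    using that by (intro sum.cong) auto
  have "rat_independent n b"
    unfolding rat_independent_def
  proof (intro allI impI)
    fix c i assume c: "\<forall>i<n. c i \<in> \<rat>" and rel: "(\<Sum>i<n. c i * b i) = 0" and "i < n"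
    obtain q where q: "\<forall>i<n. c i = of_rat (q i)"
      using c by (rule Rats_fun_cases)
    then show "c i = 0"
      using indep rel coeffs[OF q] \<open>i < n\<close> by simp
  qed
  moreover have "K = rat_span n b"
  proof
    show "K \<subseteq> rat_span n b"
      unfolding K rat_span_def by force
    show "rat_span n b \<subseteq> K"
    proof
      fix x assume "x \<in> rat_span n b"
      then obtain c where c: "\<forall>i<n. c i \<in> \<rat>" and x: "x = (\<Sum>i<n. c i * b i)"
        unfolding rat_span_def by blast
      obtain q where q: "\<forall>i<n. c i = of_rat (q i)" using c by (rule Rats_fun_cases)
      show "x \<in> K" unfolding K x coeffs[OF q] by blast
    qed
  qed
  ultimately show ?thesis by (rule that)
qed

lemma rat_span_basis:
  assumes "i < n" shows "w i \<in> rat_span n w"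
proof -
  have "(\<Sum>j<n. (if j = i then 1 else 0) * w j) = (\<Sum>j<n. if j = i then w i else 0)"
    by (rule sum.cong) auto
  then have "w i = (\<Sum>j<n. (if j = i then 1 else 0) * w j)"
    using assms by simp
  then show ?thesis
    unfolding rat_span_def by (intro CollectI exI[of _ "\<lambda>j. if j = i then 1 else 0"]) simp
qed

lemma rat_span_dependent:
  assumes "m < n" and span: "\<forall>j<n. z j \<in> rat_span m w"
  shows "\<not> rat_independent n z"
proof -
  have "\<forall>j\<in>{..<n}. \<exists>c. (\<forall>i<m. c i \<in> \<rat>) \<and> z j = (\<Sum>i<m. c i * w i)"
    using span unfolding rat_span_def by blast
  then obtain Q where Q: "\<forall>j<n. (\<forall>i<m. Q j i \<in> \<rat>) \<and> z j = (\<Sum>i<m. Q j i * w i)"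
    by (metis lessThan_iff)
  obtain y where y: "\<forall>j\<in>{..<n}. y j \<in> \<rat>" "\<exists>j\<in>{..<n}. y j \<noteq> 0"
      and rows: "\<forall>i\<in>{..<m}. (\<Sum>j<n. Q j i * y j) = 0"
    using homogeneous_system_solution[OF Rats_subfield_C, of "{..<m}" "{..<n}" "\<lambda>i j. Q j i"]
      assms(1) Q by auto
  have "(\<Sum>j<n. y j * z j) = (\<Sum>i<m. (\<Sum>j<n. Q j i * y j) * w i)"
    using Q by (simp add: sum_distrib_left sum_distrib_right sum.swap[of _ "{..<m}"] mult_ac)
  also have "\<dots> = 0" using rows by simp
  finally show ?thesis using y unfolding rat_independent_def by auto
qed

lemma Q_degree_eq_dependent:
  assumes "Q_degree_eq K n" and "\<forall>j<Suc n. z j \<in> K"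
  shows "\<not> rat_independent (Suc n) z"
proof -
  obtain b where "K = rat_span n b" by (rule Q_degree_eq_rat_basis[OF assms(1)])
  then show ?thesis using assms(2) rat_span_dependent[of n "Suc n"] by blast
qed

lemma Q_degree_eq_not_spanned:
  assumes "Q_degree_eq K n" and "m < n"
  shows "\<not> K \<subseteq> rat_span m w"
proof
  obtain b where "rat_independent n b" "K = rat_span n b"
    by (rule Q_degree_eq_rat_basis[OF assms(1)])
  moreover assume "K \<subseteq> rat_span m w"
  ultimately show False
    using rat_span_dependent[OF assms(2), of b w] rat_span_basis[of _ n b] by blast
qed

lemma Q_degree_eq_independent_spans:
  assumes deg: "Q_degree_eq K n" and z: "\<forall>i<n. z i \<in> K" and indep: "rat_independent n z"
  shows "K \<subseteq> rat_span n z"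
proof
  fix x assume "x \<in> K"
  then have "\<not> rat_independent (Suc n) (z(n := x))"
    using Q_degree_eq_dependent[OF deg] z by (simp add: less_Suc_eq)
  then obtain c where c: "\<forall>i<Suc n. c i \<in> \<rat>" "\<not> (\<forall>i<Suc n. c i = 0)"
      and "(\<Sum>i<Suc n. c i * (z(n := x)) i) = 0"
    unfolding rat_independent_def by blast
  moreover have "(\<Sum>i<n. c i * (z(n := x)) i) = (\<Sum>i<n. c i * z i)"
    by (rule sum.cong) auto
  ultimately have rel: "(\<Sum>i<n. c i * z i) + c n * x = 0"
    by simp
  have "c n \<noteq> 0"
  proof
    assume "c n = 0"
    then have "\<forall>i<n. c i = 0"
      using indep c(1) rel unfolding rat_independent_def by simp
    then show False using c(2) \<open>c n = 0\<close> by (simp add: less_Suc_eq)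
  qed
  then have "x = (\<Sum>i<n. (- c i / c n) * z i)"
    using rel by (simp add: sum_divide_distrib[symmetric] sum_negf eq_divide_eq add_eq_0_iff2)
  then show "x \<in> rat_span n z"
    using c(1) unfolding rat_span_def by (intro CollectI exI[of _ "\<lambda>i. - c i / c n"]) auto
qed

lemma rat_independent_3_iff:
  "rat_independent 3 w \<longleftrightarrow>
     (\<forall>a\<in>\<rat>. \<forall>b\<in>\<rat>. \<forall>c\<in>\<rat>. a * w 0 + b * w 1 + c * w 2 = 0 \<longrightarrow> a = 0 \<and> b = 0 \<and> c = 0)"
proof
  assume indep: "rat_independent 3 w"
  show "\<forall>a\<in>\<rat>. \<forall>b\<in>\<rat>. \<forall>c\<in>\<rat>. a * w 0 + b * w 1 + c * w 2 = 0 \<longrightarrow> a = 0 \<and> b = 0 \<and> c = 0"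
  proof (intro ballI impI)
    fix a b c assume "a \<in> \<rat>" "b \<in> \<rat>" "c \<in> \<rat>" "a * w 0 + b * w 1 + c * w 2 = 0"
    then show "a = 0 \<and> b = 0 \<and> c = 0"
      using indep[unfolded rat_independent_def, THEN spec[of _ "\<lambda>i. if i = 0 then a else if i = 1 then b else c"]]
      by (simp add: eval_nat_numeral All_less_Suc)
  qed
qed (auto simp: rat_independent_def eval_nat_numeral All_less_Suc)

lemma rat_independent_4_iff:
  "rat_independent 4 w \<longleftrightarrow>
     (\<forall>a\<in>\<rat>. \<forall>b\<in>\<rat>. \<forall>c\<in>\<rat>. \<forall>d\<in>\<rat>. a * w 0 + b * w 1 + c * w 2 + d * w 3 = 0 \<longrightarrow>
        a = 0 \<and> b = 0 \<and> c = 0 \<and> d = 0)"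
proof
  assume indep: "rat_independent 4 w"
  show "\<forall>a\<in>\<rat>. \<forall>b\<in>\<rat>. \<forall>c\<in>\<rat>. \<forall>d\<in>\<rat>. a * w 0 + b * w 1 + c * w 2 + d * w 3 = 0 \<longrightarrow>
        a = 0 \<and> b = 0 \<and> c = 0 \<and> d = 0"
  proof (intro ballI impI)
    fix a b c d assume "a \<in> \<rat>" "b \<in> \<rat>" "c \<in> \<rat>" "d \<in> \<rat>" "a * w 0 + b * w 1 + c * w 2 + d * w 3 = 0"
    then show "a = 0 \<and> b = 0 \<and> c = 0 \<and> d = 0"
      using indep[unfolded rat_independent_def,
          THEN spec[of _ "\<lambda>i. if i = 0 then a else if i = 1 then b else if i = 2 then c else d"]]
      by (simp add: eval_nat_numeral All_less_Suc)
  qed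
qed (auto simp: rat_independent_def eval_nat_numeral All_less_Suc)

lemma rat_span_2_iff: "z \<in> rat_span 2 w \<longleftrightarrow> (\<exists>a\<in>\<rat>. \<exists>b\<in>\<rat>. z = a * w 0 + b * w 1)"
proof
  assume "\<exists>a\<in>\<rat>. \<exists>b\<in>\<rat>. z = a * w 0 + b * w 1"
  then obtain a b where "a \<in> \<rat>" "b \<in> \<rat>" "z = a * w 0 + b * w 1" by blast
  then show "z \<in> rat_span 2 w"
    unfolding rat_span_def
    by (intro CollectI exI[of _ "\<lambda>i. if i = 0 then a else b"]) (simp add: eval_nat_numeral All_less_Suc)
qed (auto simp: rat_span_def eval_nat_numeral All_less_Suc)

lemma rat_span_3_iff:
  "z \<in> rat_span 3 w \<longleftrightarrow> (\<exists>a\<in>\<rat>. \<exists>b\<in>\<rat>. \<exists>c\<in>\<rat>. z = a * w 0 + b * w 1 + c * w 2)"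
proof
  assume "\<exists>a\<in>\<rat>. \<exists>b\<in>\<rat>. \<exists>c\<in>\<rat>. z = a * w 0 + b * w 1 + c * w 2"
  then obtain a b c where "a \<in> \<rat>" "b \<in> \<rat>" "c \<in> \<rat>" "z = a * w 0 + b * w 1 + c * w 2" by blast
  then show "z \<in> rat_span 3 w"
    unfolding rat_span_def
    by (intro CollectI exI[of _ "\<lambda>i. if i = 0 then a else if i = 1 then b else c"])
      (simp add: eval_nat_numeral All_less_Suc)
qed (auto simp: rat_span_def eval_nat_numeral All_less_Suc)

lemma rat_span_coordinates:
  assumes "\<forall>m<n. V m \<in> rat_span d w"
  obtains C where "\<forall>j<d. \<forall>m<n. C j m \<in> \<rat>" "\<forall>m<n. V m = (\<Sum>j<d. C j m * w j)"
proof -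
  have "\<forall>m\<in>{..<n}. \<exists>c. (\<forall>j<d. c j \<in> \<rat>) \<and> V m = (\<Sum>j<d. c j * w j)"
    using assms unfolding rat_span_def by blast
  then obtain f where "\<forall>m\<in>{..<n}. (\<forall>j<d. f m j \<in> \<rat>) \<and> V m = (\<Sum>j<d. f m j * w j)"
    by (rule bchoice[elim_format]) blast
  then show ?thesis by (intro that[of "\<lambda>j m. f m j"]) auto
qed

lemma rat_independent_orthogonal:
  assumes indep: "rat_independent d w" and u: "\<forall>m<n. u m \<in> \<rat>" and C: "\<forall>j<d. \<forall>m<n. C j m \<in> \<rat>"
    and orth: "(\<Sum>m<n. u m * (\<Sum>j<d. C j m * w j)) = 0"
  shows "\<forall>j<d. (\<Sum>m<n. u m * C j m) = 0"
proof -
  have "(\<Sum>j<d. (\<Sum>m<n. u m * C j m) * w j) = 0"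
    using orth by (simp add: sum_distrib_left sum_distrib_right sum.swap[of _ "{..<d}"] mult_ac)
  moreover have "\<forall>j<d. (\<Sum>m<n. u m * C j m) \<in> \<rat>" using u C by (auto intro!: Rats_sum)
  ultimately show ?thesis using indep unfolding rat_independent_def by auto
qed

section \<open>Cubic fields\<close>

lemma non_Rats_lincomb_eq_0:
  assumes "t \<notin> \<rat>" "u \<in> \<rat>" "v \<in> \<rat>" "u + v * t = 0"
  shows "u = 0" "v = 0"
proof -
  have "v = 0"
  proof (rule ccontr)
    assume "v \<noteq> 0"
    then have "t = - u / v" using assms(4) by (simp add: eq_divide_eq add_eq_0_iff2 mult.commute)
    then show False using assms(1-3) by simp
  qed
  then show "v = 0" "u = 0" using assms(4) by simp_all
qed

lemma quadratic_irrational_divide: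
  assumes t: "t \<notin> \<rat>" "t\<^sup>2 = \<alpha> * t + \<beta>" "\<alpha> \<in> \<rat>" "\<beta> \<in> \<rat>"
    and rats: "a \<in> \<rat>" "b \<in> \<rat>" "c \<in> \<rat>" "d \<in> \<rat>" and nz: "c + d * t \<noteq> 0"
  shows "\<exists>u\<in>\<rat>. \<exists>v\<in>\<rat>. (a + b * t) / (c + d * t) = u + v * t"
proof -
  define e where "e = c + d * \<alpha>"
  define N where "N = c * e - d\<^sup>2 * \<beta>"
  have norm: "(c + d * t) * (e - d * t) = N"
    unfolding N_def e_def using t(2) by algebra
  have conj: "e - d * t \<noteq> 0"
  proof
    assume "e - d * t = 0"
    then have "e + (- d) * t = 0" by simp
    moreover have "e \<in> \<rat>" "- d \<in> \<rat>" using rats t(3) by (simp_all add: e_def)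
    ultimately have "e = 0" "d = 0" using non_Rats_lincomb_eq_0[OF t(1)] by (metis neg_equal_0_iff_equal)+
    then show False using nz by (simp add: e_def)
  qed
  then have "N \<noteq> 0" using nz norm by force
  have "(a + b * t) / (c + d * t) = (a + b * t) * (e - d * t) / N"
    unfolding norm[symmetric] using conj by simp
  also have "(a + b * t) * (e - d * t) = (a * e - b * d * \<beta>) + (b * e - a * d - b * d * \<alpha>) * t"
    using t(2) by algebra
  also have "\<dots> / N = (a * e - b * d * \<beta>) / N + ((b * e - a * d - b * d * \<alpha>) / N) * t"
    by (simp add: add_divide_distrib)
  finally have "(a + b * t) / (c + d * t) = (a * e - b * d * \<beta>) / N + ((b * e - a * d - b * d * \<alpha>) / N) * t" .
  moreover have "(a * e - b * d * \<beta>) / N \<in> \<rat>" "(b * e - a * d - b * d * \<alpha>) / N \<in> \<rat>"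
    using rats t(3,4) by (simp_all add: e_def N_def)
  ultimately show ?thesis by blast
qed

text \<open>\<open>\<rat> + \<rat>t\<close> would be a field of degree 2 inside \<open>K\<close>: for \<open>z \<in> K\<close> outside it, the
  \<open>\<rat>\<close>-dependence of \<open>1, t, z, tz\<close> exhibits \<open>z\<close> as a quotient of two elements of \<open>\<rat> + \<rat>t\<close>.\<close>

lemma Q_degree_3_no_quadratic:
  assumes K: "is_subfield_C K" and deg: "Q_degree_eq K 3" and t: "t \<in> K" "t \<notin> \<rat>"
    and quadratic: "t\<^sup>2 = \<alpha> * t + \<beta>" "\<alpha> \<in> \<rat>" "\<beta> \<in> \<rat>"
  shows False
proof -
  obtain z where z: "z \<in> K" "z \<notin> rat_span 2 (\<lambda>i. t ^ i)"
    using Q_degree_eq_not_spanned[OF deg, of 2 "\<lambda>i. t ^ i"] by auto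
  define w where "w i = (if i = 0 then 1 else if i = 1 then t else if i = 2 then z else t * z)" for i :: nat
  have "\<forall>j<Suc 3. w j \<in> K"
    using K t(1) z(1) by (auto simp: w_def intro: subfield_C_1 subfield_C_mult)
  then have "\<not> rat_independent 4 w"
    using Q_degree_eq_dependent[OF deg] by (simp add: numeral_eq_Suc)
  then obtain d0 d1 d2 d3 where d: "d0 \<in> \<rat>" "d1 \<in> \<rat>" "d2 \<in> \<rat>" "d3 \<in> \<rat>"
      and rel: "(d0 + d1 * t) + (d2 + d3 * t) * z = 0"
      and nontrivial: "\<not> (d0 = 0 \<and> d1 = 0 \<and> d2 = 0 \<and> d3 = 0)"
    unfolding rat_independent_4_iff w_def by (auto simp: algebra_simps)
  show False
  proof (cases "d2 + d3 * t = 0")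
    case True
    then have "d2 = 0" "d3 = 0" using non_Rats_lincomb_eq_0[OF t(2) d(3,4)] by auto
    moreover have "d0 = 0" "d1 = 0" using non_Rats_lincomb_eq_0[OF t(2) d(1,2)] rel True by auto
    ultimately show False using nontrivial by simp
  next
    case False
    moreover have "(d2 + d3 * t) * z = (- d0) + (- d1) * t"
      using rel by algebra
    ultimately have z_eq: "z = ((- d0) + (- d1) * t) / (d2 + d3 * t)"
      by (simp add: eq_divide_eq mult.commute)
    have "- d0 \<in> \<rat>" "- d1 \<in> \<rat>" using d by simp_all
    from quadratic_irrational_divide[OF t(2) quadratic this d(3,4) False]
    obtain u v where "u \<in> \<rat>" "v \<in> \<rat>" "z = u + v * t" unfolding z_eq by blast
    then show False using z(2) by (auto simp: rat_span_2_iff)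
  qed
qed

lemma cubic_powers_independent:
  assumes K: "is_subfield_C K" and deg: "Q_degree_eq K 3" and t: "t \<in> K" "t \<notin> \<rat>"
  shows "rat_independent 3 (\<lambda>i. t ^ i)"
proof (rule ccontr)
  assume "\<not> rat_independent 3 (\<lambda>i. t ^ i)"
  then obtain c0 c1 c2 where c: "c0 \<in> \<rat>" "c1 \<in> \<rat>" "c2 \<in> \<rat>" "c0 + c1 * t + c2 * t\<^sup>2 = 0"
      and nontrivial: "\<not> (c0 = 0 \<and> c1 = 0 \<and> c2 = 0)"
    unfolding rat_independent_3_iff by auto
  have "c2 \<noteq> 0"
    using non_Rats_lincomb_eq_0[OF t(2) c(1,2)] c(4) nontrivial by auto
  moreover have "c2 * t\<^sup>2 = - c1 * t - c0"
    using c(4) by algebra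
  ultimately have "t\<^sup>2 = (- c1 * t - c0) / c2"
    by (simp add: eq_divide_eq mult.commute)
  then have "t\<^sup>2 = (- c1 / c2) * t + (- c0 / c2)"
    by (simp add: diff_divide_distrib)
  moreover have "- c1 / c2 \<in> \<rat>" "- c0 / c2 \<in> \<rat>" using c by simp_all
  ultimately show False by (rule Q_degree_3_no_quadratic[OF K deg t])
qed

lemma rat_independent_powers_3D:
  assumes "rat_independent 3 (\<lambda>i. t ^ i)" "a \<in> \<rat>" "b \<in> \<rat>" "c \<in> \<rat>" "a + b * t + c * t\<^sup>2 = 0"
  shows "a = 0" "b = 0" "c = 0"
  using assms unfolding rat_independent_3_iff by auto

lemma cubic_not_Rats: "rat_independent 3 (\<lambda>i. t ^ i) \<Longrightarrow> t \<notin> \<rat>"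
  using rat_independent_powers_3D(2)[of t "- t" 1 0] by auto

lemma cubic_quartic_factor:
  assumes indep: "rat_independent 3 (\<lambda>i. t ^ i)"
    and e: "e0 \<in> \<rat>" "e1 \<in> \<rat>" "e2 \<in> \<rat>" "t ^ 3 = e0 + e1 * t + e2 * t\<^sup>2"
    and h: "h0 \<in> \<rat>" "h1 \<in> \<rat>" "h2 \<in> \<rat>" "h3 \<in> \<rat>" "h4 \<in> \<rat>"
    and root: "h0 + h1 * t + h2 * t\<^sup>2 + h3 * t ^ 3 + h4 * t ^ 4 = 0"
  shows "\<exists>L\<in>\<rat>. \<forall>x. h0 + h1 * x + h2 * x\<^sup>2 + h3 * x ^ 3 + h4 * x ^ 4
                    = (h4 * x + L) * (x ^ 3 - e2 * x\<^sup>2 - e1 * x - e0)"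
proof -
  define L where "L = h3 + h4 * e2"
  define r0 where "r0 = h0 + L * e0"
  define r1 where "r1 = h1 + h4 * e0 + L * e1"
  define r2 where "r2 = h2 + h4 * e1 + L * e2"
  have division: "h0 + h1 * x + h2 * x\<^sup>2 + h3 * x ^ 3 + h4 * x ^ 4
      = (h4 * x + L) * (x ^ 3 - e2 * x\<^sup>2 - e1 * x - e0) + (r0 + r1 * x + r2 * x\<^sup>2)" for x
    unfolding r0_def r1_def r2_def L_def by algebra
  have "r0 + r1 * t + r2 * t\<^sup>2 = 0"
    using division[of t] root e(4) by simp
  moreover have rats: "r0 \<in> \<rat>" "r1 \<in> \<rat>" "r2 \<in> \<rat>" "L \<in> \<rat>"
    using e h by (simp_all add: r0_def r1_def r2_def L_def)
  ultimately have "r0 = 0" "r1 = 0" "r2 = 0"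
    using rat_independent_powers_3D[OF indep rats(1-3)] by simp_all
  then show ?thesis using division \<open>L \<in> \<rat>\<close> by auto
qed

section \<open>Rational quadratic forms over a cubic field\<close>

definition quad_form :: "nat \<Rightarrow> (nat \<Rightarrow> nat \<Rightarrow> complex) \<Rightarrow> (nat \<Rightarrow> complex) \<Rightarrow> complex" where
  "quad_form n M v = (\<Sum>i<n. \<Sum>j<n. M i j * v i * v j)"

definition polar_form ::
    "nat \<Rightarrow> (nat \<Rightarrow> nat \<Rightarrow> complex) \<Rightarrow> (nat \<Rightarrow> complex) \<Rightarrow> (nat \<Rightarrow> complex) \<Rightarrow> complex" where
  "polar_form n M u v = (\<Sum>i<n. \<Sum>j<n. M i j * (u i * v j + v i * u j))"

lemma quad_form_cong: "(\<forall>m<n. u m = v m) \<Longrightarrow> quad_form n M u = quad_form n M v"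
  unfolding quad_form_def by (intro sum.cong) auto

lemma quad_form_scale: "quad_form n M (\<lambda>m. k * v m) = k\<^sup>2 * quad_form n M v"
  unfolding quad_form_def by (simp add: sum_distrib_left power2_eq_square mult_ac)

lemma quad_form_Rats:
  "(\<forall>i<n. \<forall>j<n. M i j \<in> \<rat>) \<Longrightarrow> (\<forall>m<n. v m \<in> \<rat>) \<Longrightarrow> quad_form n M v \<in> \<rat>"
  unfolding quad_form_def by (auto intro!: Rats_sum Rats_mult)

lemma polar_form_Rats:
  "(\<forall>i<n. \<forall>j<n. M i j \<in> \<rat>) \<Longrightarrow> (\<forall>m<n. u m \<in> \<rat>) \<Longrightarrow> (\<forall>m<n. v m \<in> \<rat>)
     \<Longrightarrow> polar_form n M u v \<in> \<rat>"
  unfolding polar_form_def by (auto intro!: Rats_sum Rats_mult Rats_add)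

lemma quad_form_line:
  "quad_form n M (\<lambda>m. a m + b m * x) = quad_form n M a + polar_form n M a b * x + quad_form n M b * x\<^sup>2"
proof -
  have "quad_form n M (\<lambda>m. a m + b m * x)
      = (\<Sum>i<n. \<Sum>j<n. M i j * a i * a j + M i j * (a i * b j + b i * a j) * x + M i j * b i * b j * x\<^sup>2)"
    unfolding quad_form_def by (intro sum.cong refl) algebra
  then show ?thesis
    unfolding quad_form_def polar_form_def by (simp add: sum.distrib sum_distrib_right)
qed

lemma quad_form_quadratic_curve:
  "quad_form n M (\<lambda>m. a m + b m * x + c m * x\<^sup>2)
     = quad_form n M a + polar_form n M a b * x + (quad_form n M b + polar_form n M a c) * x\<^sup>2
       + polar_form n M b c * x ^ 3 + quad_form n M c * x ^ 4"
proof -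
  have "quad_form n M (\<lambda>m. a m + b m * x + c m * x\<^sup>2)
      = (\<Sum>i<n. \<Sum>j<n. M i j * a i * a j + M i j * (a i * b j + b i * a j) * x
          + M i j * b i * b j * x\<^sup>2 + M i j * (a i * c j + c i * a j) * x\<^sup>2
          + M i j * (b i * c j + c i * b j) * x ^ 3 + M i j * c i * c j * x ^ 4)"
    unfolding quad_form_def by (intro sum.cong refl) algebra
  then show ?thesis
    unfolding quad_form_def polar_form_def by (simp add: sum.distrib sum_distrib_right distrib_right)
qed

lemma quad_form_line_isotropic:
  assumes indep: "rat_independent 3 (\<lambda>i. t ^ i)" and M: "\<forall>i<n. \<forall>j<n. M i j \<in> \<rat>"
    and u: "\<forall>m<n. u m \<in> \<rat>" and v: "\<forall>m<n. v m \<in> \<rat>"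
    and isotropic: "quad_form n M (\<lambda>m. u m + v m * t) = 0"
  shows "quad_form n M u = 0" "quad_form n M v = 0"
proof -
  have "quad_form n M u + polar_form n M u v * t + quad_form n M v * t\<^sup>2 = 0"
    using isotropic by (simp add: quad_form_line)
  moreover have rats: "quad_form n M u \<in> \<rat>" "polar_form n M u v \<in> \<rat>" "quad_form n M v \<in> \<rat>"
    using M u v by (simp_all add: quad_form_Rats polar_form_Rats)
  ultimately show "quad_form n M u = 0" "quad_form n M v = 0"
    using rat_independent_powers_3D[OF indep rats] by simp_all
qed

lemma quad_form_isotropic_curve_vanishing:
  assumes indep: "rat_independent 3 (\<lambda>i. t ^ i)" and M: "\<forall>i<n. \<forall>j<n. M i j \<in> \<rat>"
    and b: "\<forall>m<n. b m \<in> \<rat>" and c: "\<forall>m<n. c m \<in> \<rat>" and "t0 \<in> \<rat>"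
    and vanishing: "\<forall>m<n. a m + b m * t0 + c m * t0\<^sup>2 = 0"
    and isotropic: "quad_form n M (\<lambda>m. a m + b m * t + c m * t\<^sup>2) = 0"
  shows "quad_form n M c = 0"
proof -
  define b' where "b' m = b m + t0 * c m" for m
  have "\<forall>m<n. a m + b m * t + c m * t\<^sup>2 = (t - t0) * (b' m + c m * t)"
  proof (intro allI impI)
    fix m assume "m < n"
    then have "a m + b m * t0 + c m * t0\<^sup>2 = 0" using vanishing by blast
    then show "a m + b m * t + c m * t\<^sup>2 = (t - t0) * (b' m + c m * t)"
      unfolding b'_def by algebra
  qed
  then have "(t - t0)\<^sup>2 * quad_form n M (\<lambda>m. b' m + c m * t) = quad_form n M (\<lambda>m. a m + b m * t + c m * t\<^sup>2)"
    unfolding quad_form_scale[symmetric] by (intro quad_form_cong) auto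
  moreover have "t \<noteq> t0"
    using \<open>t0 \<in> \<rat>\<close> cubic_not_Rats[OF indep] by auto
  ultimately have "quad_form n M (\<lambda>m. b' m + c m * t) = 0"
    using isotropic by simp
  moreover have "\<forall>m<n. b' m \<in> \<rat>" using b c \<open>t0 \<in> \<rat>\<close> by (simp add: b'_def)
  ultimately show ?thesis
    using quad_form_line_isotropic[OF indep M _ c] by blast
qed

text \<open>The quartic \<open>h(x) = Q(a + b x + c x\<^sup>2)\<close> has rational coefficients and vanishes at \<open>t\<close>, so
  it is divisible by the minimal polynomial of \<open>t\<close>; if \<open>Q c \<noteq> 0\<close> the linear cofactor
  yields a rational root.\<close>

lemma quad_form_cubic_rational_root:
  assumes indep: "rat_independent 3 (\<lambda>i. t ^ i)" and cubic: "t ^ 3 \<in> rat_span 3 (\<lambda>i. t ^ i)"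
    and M: "\<forall>i<n. \<forall>j<n. M i j \<in> \<rat>"
    and a: "\<forall>m<n. a m \<in> \<rat>" and b: "\<forall>m<n. b m \<in> \<rat>" and c: "\<forall>m<n. c m \<in> \<rat>"
    and isotropic: "quad_form n M (\<lambda>m. a m + b m * t + c m * t\<^sup>2) = 0"
    and anisotropic: "quad_form n M c \<noteq> 0"
  shows "\<exists>t0\<in>\<rat>. quad_form n M (\<lambda>m. a m + b m * t0 + c m * t0\<^sup>2) = 0 \<and>
           (\<exists>m<n. a m + b m * t0 + c m * t0\<^sup>2 \<noteq> 0)"
proof -
  obtain e0 e1 e2 where e: "e0 \<in> \<rat>" "e1 \<in> \<rat>" "e2 \<in> \<rat>" "t ^ 3 = e0 + e1 * t + e2 * t\<^sup>2"
    using cubic unfolding rat_span_3_iff by auto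
  define Q where "Q = quad_form n M"
  define B where "B = polar_form n M"
  have coeffs: "Q a \<in> \<rat>" "B a b \<in> \<rat>" "Q b + B a c \<in> \<rat>" "B b c \<in> \<rat>" "Q c \<in> \<rat>"
    using M a b c by (simp_all add: Q_def B_def quad_form_Rats polar_form_Rats)
  obtain L where "L \<in> \<rat>" and factor: "\<forall>x. Q (\<lambda>m. a m + b m * x + c m * x\<^sup>2)
      = (Q c * x + L) * (x ^ 3 - e2 * x\<^sup>2 - e1 * x - e0)"
    using cubic_quartic_factor[OF indep e coeffs] isotropic
    unfolding Q_def B_def quad_form_quadratic_curve by auto
  define t0 where "t0 = - L / Q c"
  have "t0 \<in> \<rat>" using \<open>L \<in> \<rat>\<close> coeffs by (simp add: t0_def)
  have "Q c * t0 + L = 0" using anisotropic by (simp add: t0_def Q_def)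
  then have root: "Q (\<lambda>m. a m + b m * t0 + c m * t0\<^sup>2) = 0" using factor by simp
  have "\<exists>m<n. a m + b m * t0 + c m * t0\<^sup>2 \<noteq> 0"
    using quad_form_isotropic_curve_vanishing[OF indep M b c \<open>t0 \<in> \<rat>\<close> _ isotropic] anisotropic
    by blast
  then show ?thesis using root \<open>t0 \<in> \<rat>\<close> unfolding Q_def by blast
qed

text \<open>Springer's theorem for the cubic extension \<open>\<rat>(t)\<close>.\<close>

theorem quad_form_cubic_isotropic:
  assumes indep: "rat_independent 3 (\<lambda>i. t ^ i)" and cubic: "t ^ 3 \<in> rat_span 3 (\<lambda>i. t ^ i)"
    and M: "\<forall>i<n. \<forall>j<n. M i j \<in> \<rat>"
    and a: "\<forall>m<n. a m \<in> \<rat>" and b: "\<forall>m<n. b m \<in> \<rat>" and c: "\<forall>m<n. c m \<in> \<rat>"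
    and isotropic: "quad_form n M (\<lambda>m. a m + b m * t + c m * t\<^sup>2) = 0"
    and nonzero: "\<exists>m<n. a m + b m * t + c m * t\<^sup>2 \<noteq> 0"
  shows "\<exists>\<alpha>\<in>\<rat>. \<exists>\<beta>\<in>\<rat>. \<exists>\<gamma>\<in>\<rat>. quad_form n M (\<lambda>m. \<alpha> * a m + \<beta> * b m + \<gamma> * c m) = 0 \<and>
           (\<exists>m<n. \<alpha> * a m + \<beta> * b m + \<gamma> * c m \<noteq> 0)"
proof -
  consider (c_zero) "\<forall>m<n. c m = 0" | (c_isotropic) "\<exists>m<n. c m \<noteq> 0" "quad_form n M c = 0"
    | (c_anisotropic) "quad_form n M c \<noteq> 0"
    by blast
  then show ?thesis
  proof cases
    case c_zero
    then have "quad_form n M (\<lambda>m. a m + b m * t) = 0"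
      using isotropic quad_form_cong[of n "\<lambda>m. a m + b m * t + c m * t\<^sup>2" "\<lambda>m. a m + b m * t"] by simp
    then have "quad_form n M a = 0" "quad_form n M b = 0"
      using quad_form_line_isotropic[OF indep M a b] by auto
    show ?thesis
    proof (cases "\<exists>m<n. b m \<noteq> 0")
      case True
      then show ?thesis using \<open>quad_form n M b = 0\<close>
        by (intro bexI[of _ 0] bexI[of _ 1]) auto
    next
      case False
      then have "\<exists>m<n. a m \<noteq> 0" using nonzero c_zero by auto
      then show ?thesis using \<open>quad_form n M a = 0\<close>
        by (intro bexI[of _ 1] bexI[of _ 0]) auto
    qed
  next
    case c_isotropic
    then show ?thesis by (intro bexI[of _ 0] bexI[of _ 1]) auto
  next
    case c_anisotropic
    then obtain t0 where "t0 \<in> \<rat>" "quad_form n M (\<lambda>m. a m + b m * t0 + c m * t0\<^sup>2) = 0"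
        "\<exists>m<n. a m + b m * t0 + c m * t0\<^sup>2 \<noteq> 0"
      using quad_form_cubic_rational_root[OF indep cubic M a b c isotropic] by blast
    then show ?thesis
      by (intro bexI[of _ 1] bexI[of _ t0] bexI[of _ "t0\<^sup>2"]) (auto simp: mult.commute)
  qed
qed

lemma quad_form_isotropic_descends:
  assumes indep: "rat_independent 3 (\<lambda>i. t ^ i)" and cubic: "t ^ 3 \<in> rat_span 3 (\<lambda>i. t ^ i)"
    and M: "\<forall>i<n. \<forall>j<n. M i j \<in> \<rat>" and C: "\<forall>j<3. \<forall>m<n. C j m \<in> \<rat>"
    and u: "\<forall>i<r. \<forall>m<n. u i m \<in> \<rat>"
    and isotropic: "quad_form n M (\<lambda>m. \<Sum>j<3. C j m * t ^ j) = 0"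
    and nonzero: "\<exists>m<n. (\<Sum>j<3. C j m * t ^ j) \<noteq> 0"
    and orth: "\<forall>i<r. (\<Sum>m<n. u i m * (\<Sum>j<3. C j m * t ^ j)) = 0"
  shows "\<exists>v. (\<forall>m<n. v m \<in> \<rat>) \<and> quad_form n M v = 0 \<and> (\<exists>m<n. v m \<noteq> 0) \<and>
           (\<forall>i<r. (\<Sum>m<n. u i m * v m) = 0)"
proof -
  have expand: "(\<Sum>j<3. C j m * t ^ j) = C 0 m + C 1 m * t + C 2 m * t\<^sup>2" for m
    by (simp add: eval_nat_numeral)
  obtain \<alpha> \<beta> \<gamma> where "\<alpha> \<in> \<rat>" "\<beta> \<in> \<rat>" "\<gamma> \<in> \<rat>"
    and isotropic_v: "quad_form n M (\<lambda>m. \<alpha> * C 0 m + \<beta> * C 1 m + \<gamma> * C 2 m) = 0"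
    and nonzero_v: "\<exists>m<n. \<alpha> * C 0 m + \<beta> * C 1 m + \<gamma> * C 2 m \<noteq> 0"
    using quad_form_cubic_isotropic[OF indep cubic M, of "C 0" "C 1" "C 2"] C isotropic nonzero
    unfolding expand by auto
  define v where "v m = \<alpha> * C 0 m + \<beta> * C 1 m + \<gamma> * C 2 m" for m
  have "(\<Sum>m<n. u i m * v m) = 0" if "i < r" for i
  proof -
    have "\<forall>j<3. (\<Sum>m<n. u i m * C j m) = 0"
      using rat_independent_orthogonal[OF indep] u C orth that by blast
    then have "(\<Sum>m<n. u i m * C 0 m) = 0" "(\<Sum>m<n. u i m * C 1 m) = 0" "(\<Sum>m<n. u i m * C 2 m) = 0"
      by simp_all
    moreover have "(\<Sum>m<n. u i m * v m)
        = \<alpha> * (\<Sum>m<n. u i m * C 0 m) + \<beta> * (\<Sum>m<n. u i m * C 1 m) + \<gamma> * (\<Sum>m<n. u i m * C 2 m)"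
      by (simp add: v_def sum.distrib sum_distrib_left algebra_simps)
    ultimately show ?thesis by simp
  qed
  moreover have "\<forall>m<n. v m \<in> \<rat>"
    using C \<open>\<alpha> \<in> \<rat>\<close> \<open>\<beta> \<in> \<rat>\<close> \<open>\<gamma> \<in> \<rat>\<close> by (simp add: v_def)
  moreover have "quad_form n M v = 0" "\<exists>m<n. v m \<noteq> 0"
    using isotropic_v nonzero_v by (simp_all add: v_def[abs_def])
  ultimately show ?thesis by blast
qed

section \<open>Pluecker coordinates of planes in 4-space\<close>

definition plucker_pairs :: "(nat \<times> nat) list" where
  "plucker_pairs = [(0, 1), (0, 2), (0, 3), (1, 2), (1, 3), (2, 3)]"

definition wedge :: "(nat \<Rightarrow> complex) \<Rightarrow> (nat \<Rightarrow> complex) \<Rightarrow> nat \<Rightarrow> complex" where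
  "wedge x y m = (case plucker_pairs ! m of (i, j) \<Rightarrow> x i * y j - x j * y i)"

lemma plucker_pairs_bound: "m < 6 \<Longrightarrow> plucker_pairs ! m \<in> {..<4} \<times> {..<4}"
  using nth_mem[of m plucker_pairs] by (auto simp: plucker_pairs_def)

definition plucker_matrix :: "nat \<Rightarrow> nat \<Rightarrow> complex" where
  "plucker_matrix i j =
     (if (i, j) = (0, 5) \<or> (i, j) = (2, 3) then 1 else if (i, j) = (1, 4) then - 1 else 0)"

lemma quad_form_plucker: "quad_form 6 plucker_matrix v = v 0 * v 5 - v 1 * v 4 + v 2 * v 3"
  by (simp add: quad_form_def plucker_matrix_def eval_nat_numeral)

lemma plucker_matrix_Rats: "\<forall>i<6. \<forall>j<6. plucker_matrix i j \<in> \<rat>"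
  by (simp add: plucker_matrix_def)

lemma wedge_eq_iff:
  "(\<forall>m<6. wedge x y m = v m) \<longleftrightarrow>
     x 0 * y 1 - x 1 * y 0 = v 0 \<and> x 0 * y 2 - x 2 * y 0 = v 1 \<and> x 0 * y 3 - x 3 * y 0 = v 2 \<and>
     x 1 * y 2 - x 2 * y 1 = v 3 \<and> x 1 * y 3 - x 3 * y 1 = v 4 \<and> x 2 * y 3 - x 3 * y 2 = v 5"
  by (auto simp: eval_nat_numeral All_less_Suc wedge_def plucker_pairs_def)

lemma plucker_wedge: "quad_form 6 plucker_matrix (wedge x y) = 0"
  unfolding quad_form_plucker by (simp add: wedge_def plucker_pairs_def) algebra

lemma wedge_scale: "wedge (\<lambda>k. a * x k) (\<lambda>k. b * y k) m = a * b * wedge x y m"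
  unfolding wedge_def by (cases "plucker_pairs ! m") (simp add: algebra_simps)

lemma wedge_lincomb_left: "wedge (\<lambda>k. a * x k + b * y k) y m = a * wedge x y m"
  and wedge_lincomb_right: "wedge x (\<lambda>k. a * x k + b * y k) m = b * wedge x y m"
  unfolding wedge_def by (cases "plucker_pairs ! m"; simp add: algebra_simps)+

lemma wedge_eq_0_left: "(\<forall>k<4. x k = 0) \<Longrightarrow> m < 6 \<Longrightarrow> wedge x y m = 0"
  and wedge_eq_0_right: "(\<forall>k<4. y k = 0) \<Longrightarrow> m < 6 \<Longrightarrow> wedge x y m = 0"
  unfolding wedge_def using plucker_pairs_bound[of m] by (auto split: prod.split)

lemma wedge_sum_right:
  "wedge x (\<lambda>k. \<Sum>l\<in>L. c l * e l k) m = (\<Sum>l\<in>L. c l * wedge x (e l) m)"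
  unfolding wedge_def
  by (cases "plucker_pairs ! m") (simp add: sum_distrib_left sum_subtractf algebra_simps)

lemma wedge_in_subfield:
  assumes F: "is_subfield_C F" and "\<forall>k<4. x k \<in> F" "\<forall>k<4. y k \<in> F" "m < 6"
  shows "wedge x y m \<in> F"
  using assms plucker_pairs_bound[OF assms(4)] unfolding wedge_def
  by (auto split: prod.split intro!: subfield_C_diff[OF F] subfield_C_mult[OF F])

text \<open>At a nonzero entry \<open>v\<^sub>i\<^sub>j\<close>, the Pluecker relation makes \<open>v\<close> the wedge of rows \<open>i\<close> and
  \<open>j\<close> of the antisymmetric matrix \<open>P\<close> of \<open>v\<close>, divided by \<open>v\<^sub>i\<^sub>j\<close>.\<close>

lemma wedge_decomposable:
  assumes F: "is_subfield_C F" and v: "\<forall>m<6. v m \<in> F"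
    and plucker: "quad_form 6 plucker_matrix v = 0" and nonzero: "\<exists>m<6. v m \<noteq> 0"
  shows "\<exists>x y. (\<forall>k<4. x k \<in> F) \<and> (\<forall>k<4. y k \<in> F) \<and> (\<forall>m<6. wedge x y m = v m)"
proof -
  have rel: "v 0 * v 5 - v 1 * v 4 + v 2 * v 3 = 0"
    using plucker by (simp add: quad_form_plucker)
  define P where "P = [[0, v 0, v 1, v 2], [- v 0, 0, v 3, v 4], [- v 1, - v 3, 0, v 5], [- v 2, - v 4, - v 5, 0]]"
  obtain m where m: "m < 6" "v m \<noteq> 0" using nonzero by blast
  define c where "c = inverse (v m)"
  have c: "c * v m = 1" "c \<in> F"
    using m v subfield_C_inverse[OF F] by (auto simp: c_def)
  have "\<forall>row\<in>set P. \<forall>e\<in>set row. e \<in> F"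
    using v subfield_C_0[OF F] subfield_C_uminus[OF F] by (simp add: P_def eval_nat_numeral All_less_Suc)
  moreover have "length P = 4" "\<forall>row\<in>set P. length row = 4" by (simp_all add: P_def)
  ultimately have P_F: "P ! i ! k \<in> F" if "i < 4" "k < 4" for i k
    using that by (metis nth_mem)
  have "\<forall>m'<6. wedge (\<lambda>k. P ! fst (plucker_pairs ! m) ! k) (\<lambda>k. c * P ! snd (plucker_pairs ! m) ! k) m' = v m'"
  proof -
    consider "m = 0" | "m = 1" | "m = 2" | "m = 3" | "m = 4" | "m = 5" using m(1) by linarith
    then show ?thesis
    proof cases
      case 1 show ?thesis using c(1) rel unfolding 1
        by (simp add: wedge_eq_iff P_def plucker_pairs_def) (intro conjI; algebra)
    next
      case 2 show ?thesis using c(1) rel unfolding 2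
        by (simp add: wedge_eq_iff P_def plucker_pairs_def) (intro conjI; algebra)
    next
      case 3 show ?thesis using c(1) rel unfolding 3
        by (simp add: wedge_eq_iff P_def plucker_pairs_def) (intro conjI; algebra)
    next
      case 4 show ?thesis using c(1) rel unfolding 4
        by (simp add: wedge_eq_iff P_def plucker_pairs_def) (intro conjI; algebra)
    next
      case 5 show ?thesis using c(1) rel unfolding 5
        by (simp add: wedge_eq_iff P_def plucker_pairs_def) (intro conjI; algebra)
    next
      case 6 show ?thesis using c(1) rel unfolding 6
        by (simp add: wedge_eq_iff P_def plucker_pairs_def) (intro conjI; algebra)
    qed
  qed
  moreover have "fst (plucker_pairs ! m) < 4" "snd (plucker_pairs ! m) < 4"
    using plucker_pairs_bound[OF m(1)] by auto
  ultimately show ?thesis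
    by (intro exI[of _ "\<lambda>k. P ! fst (plucker_pairs ! m) ! k"] exI[of _ "\<lambda>k. c * P ! snd (plucker_pairs ! m) ! k"])
      (auto intro: P_F subfield_C_mult[OF F c(2)])
qed

text \<open>Planes through \<open>\<kappa>\<close> with \<open>\<kappa> 0 \<noteq> 0\<close> are the \<open>\<kappa> \<and> y\<close> with \<open>y 0 = 0\<close>, a three-dimensional
  family, so fewer than three linear conditions leave a nonzero one.\<close>

lemma subfield_wedge_constraints:
  fixes r :: nat
  assumes F: "is_subfield_C F" and \<kappa>: "\<forall>k<4. \<kappa> k \<in> F" "\<kappa> 0 = 1"
    and "r < 3" and u: "\<forall>i<r. \<forall>m<6. u i m \<in> F"
  shows "\<exists>y. (\<forall>k<4. y k \<in> F) \<and> (\<exists>m<6. wedge \<kappa> y m \<noteq> 0) \<and>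
           (\<forall>i<r. (\<Sum>m<6. u i m * wedge \<kappa> y m) = 0)"
proof -
  define e where "e l k = (if k = l then 1 else 0 :: complex)" for l k :: nat
  define A where "A i l = (\<Sum>m<6. u i m * wedge \<kappa> (e l) m)" for i l
  have "\<forall>k<4. e l k \<in> F" for l
    by (simp add: e_def subfield_C_0[OF F] subfield_C_1[OF F])
  then have "\<forall>i\<in>{..<r}. \<forall>l\<in>{1, 2, 3}. A i l \<in> F"
    using u \<kappa>(1) unfolding A_def
    by (auto intro!: subfield_C_sum[OF F] subfield_C_mult[OF F] wedge_in_subfield[OF F])
  then obtain z where z: "\<forall>l\<in>{1, 2, 3}. z l \<in> F" "\<exists>l\<in>{1, 2, 3}. z l \<noteq> 0"
      and rows: "\<forall>i\<in>{..<r}. (\<Sum>l\<in>{1, 2, 3}. A i l * z l) = 0"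
    using homogeneous_system_solution[OF F, of "{..<r}" "{1, 2, 3 :: nat}" A] \<open>r < 3\<close> by auto
  define y where "y k = (\<Sum>l\<in>{1, 2, 3}. z l * e l k)" for k
  have "y 0 = 0" "y 1 = z 1" "y 2 = z 2" "y 3 = z 3" by (simp_all add: y_def e_def)
  then have y_F: "\<forall>k<4. y k \<in> F"
    using z(1) subfield_C_0[OF F] by (auto simp: eval_nat_numeral less_Suc_eq)
  have "wedge \<kappa> y 0 = z 1" "wedge \<kappa> y 1 = z 2" "wedge \<kappa> y 2 = z 3"
    using \<open>y 0 = 0\<close> \<open>y 1 = z 1\<close> \<open>y 2 = z 2\<close> \<open>y 3 = z 3\<close> \<kappa>(2)
    by (simp_all add: wedge_def plucker_pairs_def)
  moreover obtain l where "l \<in> {1, 2, 3}" "z l \<noteq> 0" using z(2) by blast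
  ultimately have "wedge \<kappa> y (l - 1) \<noteq> 0" "l - 1 < 6" by auto
  then have y_nonzero: "\<exists>m<6. wedge \<kappa> y m \<noteq> 0" by blast
  have "(\<Sum>m<6. u i m * wedge \<kappa> y m) = (\<Sum>l\<in>{1, 2, 3}. A i l * z l)" for i
    unfolding y_def wedge_sum_right A_def
    by (simp add: distrib_left sum.distrib sum_distrib_left mult_ac)
  then show ?thesis using y_F y_nonzero rows by auto
qed

section \<open>The period map\<close>

text \<open>\<open>x\<close> holds lattice coordinates: \<open>x 0\<close>, \<open>x 1\<close> along the columns of \<open>\<tau>\<close> and \<open>x 2\<close>, \<open>x 3\<close>
  along the unit vectors.\<close>

definition period_map :: "complex^2^2 \<Rightarrow> (nat \<Rightarrow> complex) \<Rightarrow> complex^2" where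
  "period_map \<tau> x = (\<chi> i. \<tau>$i$1 * x 0 + \<tau>$i$2 * x 1 + x (if i = 1 then 2 else 3))"

definition cross2 :: "complex^2 \<Rightarrow> complex^2 \<Rightarrow> complex" where
  "cross2 u v = u$1 * v$2 - u$2 * v$1"

definition period_plucker :: "complex^2^2 \<Rightarrow> nat \<Rightarrow> complex" where
  "period_plucker \<tau> m = [\<tau>$1$1 * \<tau>$2$2 - \<tau>$1$2 * \<tau>$2$1, - \<tau>$2$1, \<tau>$1$1, - \<tau>$2$2, \<tau>$1$2, 1] ! m"

lemma period_map_nth:
  "period_map \<tau> x $ 1 = \<tau>$1$1 * x 0 + \<tau>$1$2 * x 1 + x 2"
  "period_map \<tau> x $ 2 = \<tau>$2$1 * x 0 + \<tau>$2$2 * x 1 + x 3"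
  by (simp_all add: period_map_def)

lemma cross2_period_map:
  "cross2 (period_map \<tau> x) (period_map \<tau> y) = (\<Sum>m<6. period_plucker \<tau> m * wedge x y m)"
  by (simp add: cross2_def period_map_nth period_plucker_def wedge_def plucker_pairs_def eval_nat_numeral) algebra

lemma period_map_kernel: "period_map \<tau> (\<lambda>k. [1, 0, - \<tau>$1$1, - \<tau>$2$1] ! k) = 0"
  by (simp add: vec_eq_iff forall_2 period_map_nth)

lemma period_map_scale: "period_map \<tau> (\<lambda>k. c * x k) = c *s period_map \<tau> x"
  by (simp add: vec_eq_iff forall_2 period_map_nth algebra_simps)

lemma period_map_real_lincomb:
  "a *\<^sub>R period_map \<tau> x + b *\<^sub>R period_map \<tau> y = period_map \<tau> (\<lambda>k. of_real a * x k + of_real b * y k)"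
  unfolding vec_eq_iff forall_2 vector_add_component vector_scaleR_component period_map_nth
  by (simp add: scaleR_conv_of_real algebra_simps)

lemma period_map_real_injective:
  assumes det: "det (\<chi> i j. Im (\<tau>$i$j)) \<noteq> 0" and real: "\<forall>k<4. x k \<in> \<real>"
    and zero: "period_map \<tau> x = 0"
  shows "\<forall>k<4. x k = 0"
proof -
  have Im: "Im (x k) = 0" if "k < 4" for k using real that complex_is_Real_iff by blast
  have row1: "Im (\<tau>$1$1) * Re (x 0) + Im (\<tau>$1$2) * Re (x 1) = 0"
    using arg_cong[OF zero, of "\<lambda>u. Im (u $ 1)"] Im[of 0] Im[of 1] Im[of 2] by (simp add: period_map_nth)
  have row2: "Im (\<tau>$2$1) * Re (x 0) + Im (\<tau>$2$2) * Re (x 1) = 0"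
    using arg_cong[OF zero, of "\<lambda>u. Im (u $ 2)"] Im[of 0] Im[of 1] Im[of 3] by (simp add: period_map_nth)
  have "(Im (\<tau>$1$1) * Im (\<tau>$2$2) - Im (\<tau>$1$2) * Im (\<tau>$2$1)) * Re (x 0) = 0"
    "(Im (\<tau>$1$1) * Im (\<tau>$2$2) - Im (\<tau>$1$2) * Im (\<tau>$2$1)) * Re (x 1) = 0"
    using row1 row2 by algebra+
  moreover have "Im (\<tau>$1$1) * Im (\<tau>$2$2) - Im (\<tau>$1$2) * Im (\<tau>$2$1) \<noteq> 0"
    using det by (simp add: det_2)
  ultimately have "Re (x 0) = 0" "Re (x 1) = 0" by simp_all
  then have "x 0 = 0" "x 1 = 0" using Im[of 0] Im[of 1] by (simp_all add: complex_eq_iff)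
  moreover have "x 2 = 0" "x 3 = 0"
    using zero \<open>x 0 = 0\<close> \<open>x 1 = 0\<close> by (simp_all add: vec_eq_iff forall_2 period_map_nth)
  ultimately show ?thesis by (auto simp: eval_nat_numeral less_Suc_eq)
qed

lemma period_map_Ints_in_lattice:
  assumes "\<forall>k<4. x k \<in> \<int>"
  shows "period_map \<tau> x \<in> period_lattice \<tau>"
proof -
  have "\<forall>k<4. \<exists>n. x k = of_int n" using assms by (auto elim: Ints_cases)
  then obtain n where n: "\<forall>k<4. x k = of_int (n k)" by metis
  define a where "a j = (if j = 1 then n 0 else n 1)" for j :: 2
  define b where "b i = (if i = 1 then n 2 else n 3)" for i :: 2
  have "period_map \<tau> x = (\<chi> i. (\<Sum>j\<in>UNIV. of_int (a j) * \<tau>$i$j) + of_int (b i))"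
    using n by (simp add: vec_eq_iff forall_2 period_map_nth sum_2 a_def b_def algebra_simps)
  then show ?thesis unfolding period_lattice_def by blast
qed

lemma Rats_common_denominator:
  fixes x :: "nat \<Rightarrow> complex"
  assumes "\<forall>k<n. x k \<in> \<rat>"
  shows "\<exists>N::int. N > 0 \<and> (\<forall>k<n. of_int N * x k \<in> \<int>)"
  using assms
proof (induction n)
  case 0
  show ?case by (intro exI[of _ 1]) simp
next
  case (Suc n)
  then obtain N :: int where N: "N > 0" "\<forall>k<n. of_int N * x k \<in> \<int>" by auto
  have "x n \<in> \<rat>" using Suc.prems by simp
  then obtain a b :: int where "b > 0" and ab: "x n = of_int a / of_int b"
    by (auto elim: Rats_cases')
  have "of_int (N * b) * x k \<in> \<int>" if "k < Suc n" for k
  proof (cases "k = n")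
    case True
    have "of_int (N * b) * x k = of_int N * (of_int b * x n)" using True by (simp add: mult_ac)
    also have "\<dots> = of_int (N * a)" using \<open>b > 0\<close> ab by simp
    finally show ?thesis by (metis Ints_of_int)
  next
    case False
    then have "of_int b * (of_int N * x k) \<in> \<int>" using N(2) that by simp
    then show ?thesis by (simp add: mult_ac)
  qed
  then show ?case using N(1) \<open>b > 0\<close> by (intro exI[of _ "N * b"]) simp
qed

lemma Ints_complex_Reals: "(z :: complex) \<in> \<int> \<Longrightarrow> z \<in> \<real>"
  by (auto elim: Ints_cases)

lemma period_map_real_independent:
  assumes det: "det (\<chi> i j. Im (\<tau>$i$j)) \<noteq> 0" and real: "\<forall>k<4. x k \<in> \<real>" "\<forall>k<4. y k \<in> \<real>"
    and nonzero: "\<exists>m<6. wedge x y m \<noteq> 0"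
  shows "\<forall>a b :: real. a *\<^sub>R period_map \<tau> x + b *\<^sub>R period_map \<tau> y = 0 \<longrightarrow> a = 0 \<and> b = 0"
proof (intro allI impI)
  fix a b :: real
  define z where "z k = of_real a * x k + of_real b * y k" for k
  assume "a *\<^sub>R period_map \<tau> x + b *\<^sub>R period_map \<tau> y = 0"
  then have "period_map \<tau> z = 0" unfolding period_map_real_lincomb z_def[abs_def] .
  moreover have "\<forall>k<4. z k \<in> \<real>" using real by (simp add: z_def)
  ultimately have z0: "\<forall>k<4. z k = 0" using period_map_real_injective[OF det] by blast
  obtain m where m: "m < 6" "wedge x y m \<noteq> 0" using nonzero by blast
  have "of_real a * wedge x y m = 0" "of_real b * wedge x y m = 0"
    using wedge_eq_0_left[OF z0 m(1), of y] wedge_eq_0_right[OF z0 m(1), of x]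
    unfolding z_def wedge_lincomb_left wedge_lincomb_right by simp_all
  then show "a = 0 \<and> b = 0" using m(2) by simp
qed

lemma cross2_eq_0_collinear:
  assumes "u \<noteq> 0" "cross2 u v = 0"
  shows "\<exists>c. v = c *s u"
proof (cases "u$1 = 0")
  case True
  then have "u$2 \<noteq> 0" using assms(1) by (auto simp: vec_eq_iff forall_2)
  then show ?thesis using True assms(2)
    by (intro exI[of _ "v$2 / u$2"]) (auto simp: vec_eq_iff forall_2 cross2_def)
next
  case False
  then show ?thesis using assms(2)
    by (intro exI[of _ "v$1 / u$1"]) (auto simp: vec_eq_iff forall_2 cross2_def field_simps)
qed

lemma rational_plane_not_simple:
  assumes det: "det (\<chi> i j. Im (\<tau>$i$j)) \<noteq> 0"
    and x: "\<forall>k<4. x k \<in> \<rat>" and y: "\<forall>k<4. y k \<in> \<rat>" and nonzero: "\<exists>m<6. wedge x y m \<noteq> 0"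
    and collinear: "cross2 (period_map \<tau> x) (period_map \<tau> y) = 0"
  shows "\<not> is_simple_surface \<tau>"
proof -
  obtain N :: int where N: "N > 0" "\<forall>k<4. of_int N * x k \<in> \<int>"
    using Rats_common_denominator[OF x] by blast
  obtain M :: int where M: "M > 0" "\<forall>k<4. of_int M * y k \<in> \<int>"
    using Rats_common_denominator[OF y] by blast
  define u where "u = period_map \<tau> (\<lambda>k. of_int N * x k)"
  define v where "v = period_map \<tau> (\<lambda>k. of_int M * y k)"
  have lattice: "u \<in> period_lattice \<tau>" "v \<in> period_lattice \<tau>"
    unfolding u_def v_def using N(2) M(2) by (simp_all add: period_map_Ints_in_lattice)
  have "\<forall>k<4. of_int N * x k \<in> \<real>" "\<forall>k<4. of_int M * y k \<in> \<real>"
    using N(2) M(2) Ints_complex_Reals by simp_all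
  moreover have "\<exists>m<6. wedge (\<lambda>k. of_int N * x k) (\<lambda>k. of_int M * y k) m \<noteq> 0"
    using nonzero N(1) M(1) by (simp add: wedge_scale)
  ultimately have indep: "\<forall>a b :: real. a *\<^sub>R u + b *\<^sub>R v = 0 \<longrightarrow> a = 0 \<and> b = 0"
    unfolding u_def v_def by (rule period_map_real_independent[OF det])
  then have "u \<noteq> 0" using indep[rule_format, of 1 0] by auto
  moreover have "cross2 u v = 0"
    using collinear by (simp add: u_def v_def period_map_scale cross2_def algebra_simps)
  ultimately have "\<exists>d. v = d *s u" using cross2_eq_0_collinear by blast
  moreover have "\<exists>c. u = c *s u" by (rule exI[of _ 1]) (simp add: vec_eq_iff)
  ultimately show ?thesis
    unfolding is_simple_surface_def using \<open>u \<noteq> 0\<close> lattice indep by blast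
qed

lemma period_plucker_in_subfield:
  assumes F: "is_subfield_C F" and "\<forall>i j. \<tau>$i$j \<in> F" and "m < 6"
  shows "period_plucker \<tau> m \<in> F"
proof -
  have "\<forall>w\<in>set [\<tau>$1$1 * \<tau>$2$2 - \<tau>$1$2 * \<tau>$2$1, - \<tau>$2$1, \<tau>$1$1, - \<tau>$2$2, \<tau>$1$2, 1]. w \<in> F"
    using assms(2) by (auto intro!: subfield_C_diff[OF F] subfield_C_mult[OF F] subfield_C_uminus[OF F]
        subfield_C_1[OF F])
  then show ?thesis
    unfolding period_plucker_def by (rule bspec, intro nth_mem) (use assms(3) in \<open>simp add: numeral_eq_Suc\<close>)
qed

section \<open>Cubic period fields\<close>

text \<open>The vector \<open>\<kappa>\<close> lies in the kernel of the period map, so every plane through it maps into a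
  complex line and is orthogonal to \<open>period_plucker \<tau>\<close>. Imposing the two rational components
  \<open>CW 1\<close>, \<open>CW 2\<close> of \<open>period_plucker \<tau>\<close> on such a plane therefore forces the third one as well.\<close>

lemma cubic_periods_isotropic_vector:
  assumes K: "is_subfield_C K" and entries: "\<forall>i j. \<tau>$i$j \<in> K" and "t \<in> K"
    and indep: "rat_independent 3 (\<lambda>j. t ^ j)" and span: "K \<subseteq> rat_span 3 (\<lambda>j. t ^ j)"
    and CW: "\<forall>j<3. \<forall>m<6. CW j m \<in> \<rat>" and W: "\<forall>m<6. period_plucker \<tau> m = (\<Sum>j<3. CW j m * t ^ j)"
  shows "\<exists>v. (\<forall>m<6. v m \<in> \<rat>) \<and> quad_form 6 plucker_matrix v = 0 \<and> (\<exists>m<6. v m \<noteq> 0) \<and>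
           (\<forall>j<3. (\<Sum>m<6. CW j m * v m) = 0)"
proof -
  have cubic: "t ^ 3 \<in> rat_span 3 (\<lambda>j. t ^ j)"
    using span subfield_C_power[OF K \<open>t \<in> K\<close>] by blast
  define \<kappa> where "\<kappa> k = [1, 0, - \<tau>$1$1, - \<tau>$2$1] ! k" for k
  have \<kappa>: "\<forall>k<4. \<kappa> k \<in> K" "\<kappa> 0 = 1"
    using entries subfield_C_0[OF K] subfield_C_1[OF K] subfield_C_uminus[OF K]
    by (auto simp: \<kappa>_def eval_nat_numeral less_Suc_eq)
  obtain z where z: "\<forall>k<4. z k \<in> K" "\<exists>m<6. wedge \<kappa> z m \<noteq> 0"
    and orth12: "\<forall>i<2. (\<Sum>m<6. CW (Suc i) m * wedge \<kappa> z m) = 0"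
    using subfield_wedge_constraints[OF K \<kappa>, of 2 "\<lambda>i. CW (Suc i)"] CW subfield_C_Rats[OF K] by auto
  have "(\<Sum>m<6. period_plucker \<tau> m * wedge \<kappa> z m) = 0"
    using cross2_period_map[of \<tau> \<kappa> z] period_map_kernel[of \<tau>] by (simp add: cross2_def \<kappa>_def[abs_def])
  then have "(\<Sum>j<3. (\<Sum>m<6. CW j m * wedge \<kappa> z m) * t ^ j) = 0"
    using W by (simp add: sum_distrib_left sum_distrib_right sum.swap[of _ "{..<3}"] mult_ac)
  with orth12 have orth: "\<forall>j<3. (\<Sum>m<6. CW j m * wedge \<kappa> z m) = 0"
    by (simp add: eval_nat_numeral All_less_Suc)
  obtain CV where CV: "\<forall>j<3. \<forall>m<6. CV j m \<in> \<rat>" and V: "\<forall>m<6. wedge \<kappa> z m = (\<Sum>j<3. CV j m * t ^ j)"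
    using rat_span_coordinates[of 6 "wedge \<kappa> z" 3] wedge_in_subfield[OF K \<kappa>(1) z(1)] span by blast
  have "quad_form 6 plucker_matrix (\<lambda>m. \<Sum>j<3. CV j m * t ^ j) = quad_form 6 plucker_matrix (wedge \<kappa> z)"
    using V by (intro quad_form_cong) simp
  then have isotropic: "quad_form 6 plucker_matrix (\<lambda>m. \<Sum>j<3. CV j m * t ^ j) = 0"
    by (simp add: plucker_wedge)
  have nonzero: "\<exists>m<6. (\<Sum>j<3. CV j m * t ^ j) \<noteq> 0"
    using z(2) V by auto
  have "(\<Sum>m<6. CW i m * (\<Sum>j<3. CV j m * t ^ j)) = (\<Sum>m<6. CW i m * wedge \<kappa> z m)" for i
    using V by (intro sum.cong) simp_all
  then have "\<forall>i<3. (\<Sum>m<6. CW i m * (\<Sum>j<3. CV j m * t ^ j)) = 0"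
    using orth by simp
  then show ?thesis
    using quad_form_isotropic_descends[OF indep cubic plucker_matrix_Rats CV CW isotropic nonzero] by blast
qed

lemma cubic_periods_rational_plane:
  assumes K: "is_subfield_C K" and entries: "\<forall>i j. \<tau>$i$j \<in> K" and "t \<in> K"
    and indep: "rat_independent 3 (\<lambda>j. t ^ j)" and span: "K \<subseteq> rat_span 3 (\<lambda>j. t ^ j)"
  shows "\<exists>x y. (\<forall>k<4. x k \<in> \<rat>) \<and> (\<forall>k<4. y k \<in> \<rat>) \<and> (\<exists>m<6. wedge x y m \<noteq> 0) \<and>
           cross2 (period_map \<tau> x) (period_map \<tau> y) = 0"
proof -
  obtain CW where CW: "\<forall>j<3. \<forall>m<6. CW j m \<in> \<rat>"
    and W: "\<forall>m<6. period_plucker \<tau> m = (\<Sum>j<3. CW j m * t ^ j)"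
    using rat_span_coordinates[of 6 "period_plucker \<tau>" 3] period_plucker_in_subfield[OF K entries] span
    by blast
  obtain v where v: "\<forall>m<6. v m \<in> \<rat>" "quad_form 6 plucker_matrix v = 0" "\<exists>m<6. v m \<noteq> 0"
      and v_orth: "\<forall>j<3. (\<Sum>m<6. CW j m * v m) = 0"
    using cubic_periods_isotropic_vector[OF K entries \<open>t \<in> K\<close> indep span CW W] by blast
  obtain x y where xy: "\<forall>k<4. x k \<in> \<rat>" "\<forall>k<4. y k \<in> \<rat>" "\<forall>m<6. wedge x y m = v m"
    using wedge_decomposable[OF Rats_subfield_C v(1-3)] by blast
  have "cross2 (period_map \<tau> x) (period_map \<tau> y) = (\<Sum>m<6. period_plucker \<tau> m * v m)"
    unfolding cross2_period_map using xy(3) by simp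
  also have "\<dots> = (\<Sum>j<3. (\<Sum>m<6. CW j m * v m) * t ^ j)"
    using W by (simp add: sum_distrib_left sum_distrib_right sum.swap[of _ "{..<3}"] mult_ac)
  also have "\<dots> = 0" using v_orth by simp
  finally have "cross2 (period_map \<tau> x) (period_map \<tau> y) = 0" .
  moreover have "\<exists>m<6. wedge x y m \<noteq> 0" using xy(3) v(3) by auto
  ultimately show ?thesis using xy(1,2) by (intro exI[of _ x] exI[of _ y]) simp
qed

lemma det_Im_non_Rats_entry:
  fixes \<tau> :: "complex^2^2"
  assumes "det (\<chi> i j. Im (\<tau>$i$j)) \<noteq> 0"
  obtains i j where "\<tau>$i$j \<notin> \<rat>"
proof -
  have "\<exists>i j. Im (\<tau>$i$j) \<noteq> 0"
  proof (rule ccontr)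
    assume "\<not> (\<exists>i j. Im (\<tau>$i$j) \<noteq> 0)"
    then have "det (\<chi> i j. Im (\<tau>$i$j)) = 0" by (simp add: det_2)
    then show False using assms by simp
  qed
  then obtain i j where "Im (\<tau>$i$j) \<noteq> 0" by blast
  then have "\<tau>$i$j \<notin> \<rat>" by (auto elim: Rats_cases')
  then show ?thesis by (rule that)
qed

theorem mainTheorem10:
  fixes \<tau> :: "complex^2^2"
  assumes "is_abelian_surface \<tau>"
    and "is_simple_surface \<tau>"
  shows "\<not> Q_degree_eq (gen_field {\<tau>$i$j | i j. True}) 3"
proof
  define K where "K = gen_field {\<tau>$i$j | i j. True}"
  assume "Q_degree_eq (gen_field {\<tau>$i$j | i j. True}) 3"
  then have deg: "Q_degree_eq K 3" unfolding K_def .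
  have K: "is_subfield_C K" unfolding K_def by (rule subfield_C_gen_field)
  have entries: "\<forall>i j. \<tau>$i$j \<in> K"
    unfolding K_def using subset_gen_field[of "{\<tau>$i$j | i j. True}"] by auto
  have det: "det (\<chi> i j. Im (\<tau>$i$j)) \<noteq> 0"
    using assms(1) unfolding is_abelian_surface_def by blast
  obtain i j where "\<tau>$i$j \<notin> \<rat>" using det by (rule det_Im_non_Rats_entry)
  then have indep: "rat_independent 3 (\<lambda>k. (\<tau>$i$j) ^ k)"
    using cubic_powers_independent[OF K deg] entries by blast
  moreover have "K \<subseteq> rat_span 3 (\<lambda>k. (\<tau>$i$j) ^ k)"
    using Q_degree_eq_independent_spans[OF deg _ indep] entries subfield_C_power[OF K] by blast
  ultimately obtain x y where "\<forall>k<4. x k \<in> \<rat>" "\<forall>k<4. y k \<in> \<rat>" "\<exists>m<6. wedge x y m \<noteq> 0"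
      "cross2 (period_map \<tau> x) (period_map \<tau> y) = 0"
    using cubic_periods_rational_plane[OF K entries] entries by blast
  then show False using rational_plane_not_simple[OF det] assms(2) by blast
qed

end
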